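(* Let $G$ be a planar graph and let $U$ be a set of four vertices of $G$, each of degree $5$, such that $G$ is almost $4$-connected with respect to $U$. Then there is no vertex $u\in U$ together with three neighbors $v_1,v_2,v_3$ of $u$ such that $\{u,v_1,v_2,v_3\}$ induces a complete graph $K_4$ in $G$.
   Context: All graphs are finite, simple and undirected. A $3$-cut is a set $A$ of three vertices whose removal disconnects the graph. $G$ is almost $4$-connected with respect to $U$ if $G$ has no $3$-cut $A=\{a_1,a_2,a_3\}$ such that two vertices $u,u'\in U\setminus A$ lie in different components of $G\setminus A$, or two neighbors of some $u\in U\cap A$ lie in different components of $G\setminus A$. *)

theory Defs
  imports "HOL-Analysis.Analysis"
begin

definition simple_graph :: "'a set \<Rightarrow> ('a \<Rightarrow> 'a \<Rightarrow> bool) \<Rightarrow> bool" where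
  "simple_graph V E \<longleftrightarrow> finite V \<and>
     (\<forall>x y. E x y \<longrightarrow> x \<in> V \<and> y \<in> V \<and> x \<noteq> y \<and> E y x)"

definition degree :: "'a set \<Rightarrow> ('a \<Rightarrow> 'a \<Rightarrow> bool) \<Rightarrow> 'a \<Rightarrow> nat" where
  "degree V E x = card {y \<in> V. E x y}"

definition planar :: "'a set \<Rightarrow> ('a \<Rightarrow> 'a \<Rightarrow> bool) \<Rightarrow> bool" where
  "planar V E \<longleftrightarrow> (\<exists>(f :: 'a \<Rightarrow> complex) (\<gamma> :: 'a \<Rightarrow> 'a \<Rightarrow> real \<Rightarrow> complex).
     inj_on f V \<and>
     (\<forall>x y. E x y \<longrightarrow> arc (\<gamma> x y) \<and> pathstart (\<gamma> x y) = f x \<and> pathfinish (\<gamma> x y) = f y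
        \<and> path_image (\<gamma> x y) \<inter> f ` V = {f x, f y}) \<and>
     (\<forall>x y x' y'. E x y \<longrightarrow> E x' y' \<longrightarrow> {x, y} \<noteq> {x', y'} \<longrightarrow>
        path_image (\<gamma> x y) \<inter> path_image (\<gamma> x' y') \<subseteq> f ` ({x, y} \<inter> {x', y'})))"

definition conn_in :: "('a \<Rightarrow> 'a \<Rightarrow> bool) \<Rightarrow> 'a set \<Rightarrow> 'a \<Rightarrow> 'a \<Rightarrow> bool" where
  "conn_in E S x y \<longleftrightarrow> (x, y) \<in> {(a, b). a \<in> S \<and> b \<in> S \<and> E a b}\<^sup>*"

definition diff_comp :: "'a set \<Rightarrow> ('a \<Rightarrow> 'a \<Rightarrow> bool) \<Rightarrow> 'a set \<Rightarrow> 'a \<Rightarrow> 'a \<Rightarrow> bool" where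
  "diff_comp V E A x y \<longleftrightarrow> x \<in> V - A \<and> y \<in> V - A \<and> \<not> conn_in E (V - A) x y"

definition three_cut :: "'a set \<Rightarrow> ('a \<Rightarrow> 'a \<Rightarrow> bool) \<Rightarrow> 'a set \<Rightarrow> bool" where
  "three_cut V E A \<longleftrightarrow> A \<subseteq> V \<and> card A = 3 \<and> (\<exists>x y. diff_comp V E A x y)"

definition almost_4_connected :: "'a set \<Rightarrow> ('a \<Rightarrow> 'a \<Rightarrow> bool) \<Rightarrow> 'a set \<Rightarrow> bool" where
  "almost_4_connected V E U \<longleftrightarrow> \<not> (\<exists>A. three_cut V E A \<and>
     ((\<exists>u u'. u \<in> U - A \<and> u' \<in> U - A \<and> diff_comp V E A u u') \<or>
      (\<exists>u \<in> U \<inter> A. \<exists>w w'. E u w \<and> E u w' \<and> diff_comp V E A w w')))"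

end

(*
  Suppose u in U has neighbours v1, v2, v3 spanning a K4 with u, and let w be a further
  neighbour of u, which exists since u has degree 5. For each vertex a of the K4, the other
  three vertices form a 3-set containing u (for a = u, use the edge uw instead), so almost
  4-connectivity keeps w and a in one component of G minus that 3-set. This component is
  drawn off the triangle spanned by the 3-set, so in a plane drawing w lies on the same side
  of each of the four triangles as the opposite vertex.

  That is impossible by Jordan curve arguments on theta-curves: in every plane drawing of
  K4 some vertex d lies inside its opposite triangle T, and then the inside of T is tiled by
  the three other triangles and the three edges at d. Being inside T like d, the point w lies
  inside one of the small triangles; its opposite vertex would then lie inside that small
  triangle, hence inside T, although it is a corner of T.
*)
theory Submission
  imports Defs
begin

section \<open>Arcs and theta-curves in the plane\<close>

definition arc_joining :: "'a::real_normed_vector set \<Rightarrow> 'a \<Rightarrow> 'a \<Rightarrow> bool" where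
  "arc_joining A p q \<longleftrightarrow> (\<exists>g. arc g \<and> pathstart g = p \<and> pathfinish g = q \<and> path_image g = A)"

lemma arc_joining_sym: "arc_joining A p q \<Longrightarrow> arc_joining A q p"
  unfolding arc_joining_def
  by (metis arc_reversepath path_image_reversepath pathfinish_reversepath pathstart_reversepath)

lemma arc_joining_Un:
  assumes "arc_joining A p q" "arc_joining B q r" "A \<inter> B \<subseteq> {q}"
  shows "arc_joining (A \<union> B) p r"
proof -
  obtain g h where "arc g" "pathstart g = p" "pathfinish g = q" "path_image g = A"
    "arc h" "pathstart h = q" "pathfinish h = r" "path_image h = B"
    using assms(1,2) unfolding arc_joining_def by blast
  then show ?thesis
    using assms(3) unfolding arc_joining_def
    by (intro exI[of _ "g +++ h"]) (simp add: arc_join_eq path_image_join)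
qed

lemma arc_joining_ends:
  assumes "arc_joining A p q"
  shows "p \<in> A" "q \<in> A" "p \<noteq> q"
  using assms arc_distinct_ends pathstart_in_path_image pathfinish_in_path_image
  unfolding arc_joining_def by metis+

lemma connected_arc_joining: "arc_joining A p q \<Longrightarrow> connected A"
  unfolding arc_joining_def using connected_path_image arc_imp_path by blast

lemma connected_arc_joining_interior:
  assumes "arc_joining A p q"
  shows "connected (A - {p, q})"
  using assms connected_simple_path_endless arc_imp_simple_path unfolding arc_joining_def by metis

lemma arc_joining_interior_nonempty:
  assumes "arc_joining A p q"
  shows "A - {p, q} \<noteq> {}"
  using assms nonempty_simple_path_endless arc_imp_simple_path unfolding arc_joining_def by metis

lemma connected_arc_joining_minus_start:
  assumes "arc_joining A p q"
  shows "connected (A - {p})"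
proof -
  obtain g where g: "arc g" "pathstart g = p" "path_image g = A"
    using assms unfolding arc_joining_def by blast
  have "g ` ({0..1} - {0}) = g ` {0..1} - g ` {0}"
    using g(1) unfolding arc_def by (intro inj_on_image_set_diff) auto
  then have "A - {p} = g ` ({0..1} - {0})"
    using g by (simp add: path_image_def pathstart_def)
  also have "\<dots> = g ` {0<..1}"
    by (rule arg_cong[where f = "image g"]) auto
  finally show ?thesis
    using g(1) unfolding arc_def path_def
    by (metis connected_Ioc connected_continuous_image continuous_on_subset
        greaterThanAtMost_subseteq_atLeastAtMost_iff order_refl)
qed

lemma connected_subset_inside:
  assumes "connected X" "X \<inter> J = {}" "X \<inter> inside J \<noteq> {}"
  shows "X \<subseteq> inside J"
  using assms inside_same_component[OF connected_componentI[of X "- J"]] by blast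

lemma connected_inside_or_outside:
  assumes "connected X" "X \<inter> J = {}"
  shows "X \<subseteq> inside J \<or> X \<subseteq> outside J"
  using connected_subset_inside[OF assms] assms(2) inside_Un_outside[of J] by blast

lemma Jordan_arc_joining_Un:
  fixes A B :: "complex set"
  assumes "arc_joining A p q" "arc_joining B p q" "A \<inter> B = {p, q}"
  shows "inside (A \<union> B) \<noteq> {}" "connected (inside (A \<union> B))"
    "bounded (inside (A \<union> B))" "connected (outside (A \<union> B))"
    "closure (inside (A \<union> B)) = inside (A \<union> B) \<union> (A \<union> B)"
    "outside (A \<union> B) = - closure (inside (A \<union> B))"
proof -
  obtain g h where g: "arc g" "pathstart g = p" "pathfinish g = q" "path_image g = A"
    and h: "arc h" "pathstart h = p" "pathfinish h = q" "path_image h = B"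
    using assms(1,2) unfolding arc_joining_def by blast
  have "simple_path (g +++ reversepath h)"
    using g h assms(3) by (subst simple_path_join_loop_eq) (auto simp: arc_reversepath)
  moreover have "pathfinish (g +++ reversepath h) = pathstart (g +++ reversepath h)"
    using g h by simp
  moreover have "path_image (g +++ reversepath h) = A \<union> B"
    using g h by (simp add: path_image_join)
  ultimately have J: "inside (A \<union> B) \<noteq> {} \<and> connected (inside (A \<union> B)) \<and> bounded (inside (A \<union> B)) \<and>
      connected (outside (A \<union> B)) \<and> frontier (inside (A \<union> B)) = A \<union> B"
    using Jordan_inside_outside by metis
  then show "inside (A \<union> B) \<noteq> {}" "connected (inside (A \<union> B))"
    "bounded (inside (A \<union> B))" "connected (outside (A \<union> B))"
    by auto
  show closure: "closure (inside (A \<union> B)) = inside (A \<union> B) \<union> (A \<union> B)"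
    using J closure_Un_frontier by metis
  show "outside (A \<union> B) = - closure (inside (A \<union> B))"
    unfolding closure by (simp add: outside_inside Un_commute)
qed

definition theta_curve :: "complex set \<Rightarrow> complex set \<Rightarrow> complex set \<Rightarrow> complex \<Rightarrow> complex \<Rightarrow> bool" where
  "theta_curve A B C p q \<longleftrightarrow> arc_joining A p q \<and> arc_joining B p q \<and> arc_joining C p q
     \<and> A \<inter> B = {p, q} \<and> A \<inter> C = {p, q} \<and> B \<inter> C = {p, q}"

lemma theta_curve_permute:
  assumes "theta_curve A B C p q"
  shows "theta_curve B A C p q" "theta_curve C A B p q" "theta_curve C B A p q"
    "theta_curve B C A p q"
  using assms unfolding theta_curve_def by (simp_all add: Int_commute)

lemma theta_curve_split_inside:
  assumes "theta_curve A B C p q" "(C - {p, q}) \<inter> inside (A \<union> B) \<noteq> {}"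
  shows "inside (A \<union> C) \<union> inside (B \<union> C) \<union> (C - {p, q}) = inside (A \<union> B)"
proof -
  obtain a where a: "arc a" "pathstart a = p" "pathfinish a = q" "path_image a = A"
    using assms(1) unfolding theta_curve_def arc_joining_def by blast
  obtain b where b: "arc b" "pathstart b = p" "pathfinish b = q" "path_image b = B"
    using assms(1) unfolding theta_curve_def arc_joining_def by blast
  obtain c where c: "arc c" "pathstart c = p" "pathfinish c = q" "path_image c = C"
    using assms(1) unfolding theta_curve_def arc_joining_def by blast
  have "p \<noteq> q"
    using c arc_distinct_ends by metis
  from split_inside_simple_closed_curve[OF arc_imp_simple_path[OF a(1)] a(2,3)
      arc_imp_simple_path[OF b(1)] b(2,3) arc_imp_simple_path[OF c(1)] c(2,3) this]
  show ?thesis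
    using assms a b c unfolding theta_curve_def by blast
qed

lemma theta_curve_inside_outside:
  assumes theta: "theta_curve A B C p q"
    and B_out: "B - {p, q} \<subseteq> outside (A \<union> C)" and C_out: "C - {p, q} \<subseteq> outside (A \<union> B)"
  shows "inside (A \<union> B) \<subseteq> outside (A \<union> C)"
proof -
  note AB = Jordan_arc_joining_Un[of A p q B] and AC = Jordan_arc_joining_Un[of A p q C]
  have arcs: "arc_joining A p q" "arc_joining B p q" "arc_joining C p q"
    and meet: "A \<inter> B = {p, q}" "A \<inter> C = {p, q}" "B \<inter> C = {p, q}"
    using theta unfolding theta_curve_def by auto
  have "inside (A \<union> B) \<inter> (A \<union> C) = {}"
    using C_out meet(1) inside_Int_outside[of "A \<union> B"] inside_no_overlap[of "A \<union> B"] by blast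
  then have "inside (A \<union> B) \<subseteq> inside (A \<union> C) \<or> inside (A \<union> B) \<subseteq> outside (A \<union> C)"
    using connected_inside_or_outside AB(2) arcs meet by blast
  moreover have "\<not> inside (A \<union> B) \<subseteq> inside (A \<union> C)"
  proof
    assume "inside (A \<union> B) \<subseteq> inside (A \<union> C)"
    then have "closure (inside (A \<union> B)) \<subseteq> closure (inside (A \<union> C))"
      by (rule closure_mono)
    moreover obtain x where x: "x \<in> B - {p, q}"
      using arc_joining_interior_nonempty[OF arcs(2)] by blast
    ultimately have "x \<in> inside (A \<union> C) \<union> (A \<union> C)"
      using AB(5) AC(5) arcs meet by blast
    moreover have "x \<notin> A \<union> C"
      using x meet by blast
    ultimately show False
      using x B_out inside_Int_outside[of "A \<union> C"] by blast
  qed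
  ultimately show ?thesis
    by blast
qed

text \<open>If all three open arcs lay outside the opposite cycles, the complement of the two closed
  discs bounded by \<open>A \<union> C\<close> and \<open>B \<union> C\<close> would be connected by Janiszewski's theorem,
  hence trapped inside \<open>A \<union> B\<close> and bounded, which is absurd.\<close>
lemma theta_curve_arc_inside:
  assumes theta: "theta_curve A B C p q"
  shows "A - {p, q} \<subseteq> inside (B \<union> C) \<or> B - {p, q} \<subseteq> inside (A \<union> C)
    \<or> C - {p, q} \<subseteq> inside (A \<union> B)"
proof (rule ccontr)
  assume none_inside: "\<not> ?thesis"
  have arcs: "arc_joining A p q" "arc_joining B p q" "arc_joining C p q"
    and meet: "A \<inter> B = {p, q}" "A \<inter> C = {p, q}" "B \<inter> C = {p, q}"
    using theta unfolding theta_curve_def by auto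
  note AB = Jordan_arc_joining_Un[OF arcs(1,2) meet(1)]
    and AC = Jordan_arc_joining_Un[OF arcs(1,3) meet(2)]
    and BC = Jordan_arc_joining_Un[OF arcs(2,3) meet(3)]
  have out_A: "A - {p, q} \<subseteq> outside (B \<union> C)"
    using connected_inside_or_outside[OF connected_arc_joining_interior[OF arcs(1)], of "B \<union> C"]
      none_inside meet by blast
  have out_B: "B - {p, q} \<subseteq> outside (A \<union> C)"
    using connected_inside_or_outside[OF connected_arc_joining_interior[OF arcs(2)], of "A \<union> C"]
      none_inside meet by blast
  have out_C: "C - {p, q} \<subseteq> outside (A \<union> B)"
    using connected_inside_or_outside[OF connected_arc_joining_interior[OF arcs(3)], of "A \<union> B"]
      none_inside meet by blast
  have "inside (A \<union> B) \<subseteq> outside (A \<union> C)"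
    using theta_curve_inside_outside[OF theta out_B out_C] .
  moreover have "inside (A \<union> B) \<subseteq> outside (B \<union> C)"
    using theta_curve_inside_outside[OF theta_curve_permute(1)[OF theta]] out_A out_C
    by (simp add: Un_commute)
  ultimately have inside_AB: "inside (A \<union> B) \<subseteq> outside (A \<union> C) \<inter> outside (B \<union> C)"
    by blast
  have AC_BC: "inside (A \<union> C) \<subseteq> outside (B \<union> C)" "inside (B \<union> C) \<subseteq> outside (A \<union> C)"
    using theta_curve_inside_outside[OF theta_curve_permute(2)[OF theta]]
      theta_curve_inside_outside[OF theta_curve_permute(3)[OF theta]] out_A out_B
    by (simp_all add: Un_commute)
  define X where "X = closure (inside (A \<union> C))"
  define Y where "Y = closure (inside (B \<union> C))"
  have "inside (A \<union> C) \<inter> (inside (B \<union> C) \<union> (B \<union> C)) = {}"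
    using AC_BC(1) inside_Int_outside[of "B \<union> C"] outside_no_overlap[of "B \<union> C"] by blast
  moreover have "inside (B \<union> C) \<inter> (A \<union> C) = {}"
    using AC_BC(2) outside_no_overlap[of "A \<union> C"] by blast
  moreover have "(A \<union> C) \<inter> (B \<union> C) = C"
    using meet(1) arc_joining_ends[OF arcs(3)] by auto
  ultimately have "X \<inter> Y = C"
    unfolding X_def Y_def AC(5) BC(5) by blast
  then have "connected (- (X \<union> Y))"
    using Janiszewski_connected[of X Y] AC(3) BC(6) AC(6) AC(4) BC(4) connected_arc_joining[OF arcs(3)]
    unfolding X_def Y_def by (simp add: compact_closure)
  moreover have outside_XY: "- (X \<union> Y) = outside (A \<union> C) \<inter> outside (B \<union> C)"
    unfolding X_def Y_def AC(6) BC(6) by blast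
  moreover have "(outside (A \<union> C) \<inter> outside (B \<union> C)) \<inter> (A \<union> B) = {}"
    using outside_no_overlap[of "A \<union> C"] outside_no_overlap[of "B \<union> C"] by blast
  ultimately have "- (X \<union> Y) \<subseteq> inside (A \<union> B)"
    using connected_inside_or_outside[of "- (X \<union> Y)" "A \<union> B"] inside_AB AB(1)
      inside_Int_outside[of "A \<union> B"] by blast
  then have "bounded (- (X \<union> Y))"
    using AB(3) bounded_subset by blast
  moreover have "bounded (X \<union> Y)"
    unfolding X_def Y_def using AC(3) BC(3) by (simp add: bounded_closure)
  ultimately have "bounded ((X \<union> Y) \<union> - (X \<union> Y))"
    using bounded_Un by blast
  then show False
    by (metis Compl_partition not_bounded_UNIV)
qed

section \<open>Plane drawings of K4\<close>

definition complete_image :: "('v \<Rightarrow> 'v \<Rightarrow> 'b set) \<Rightarrow> 'v set \<Rightarrow> 'b set" where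
  "complete_image S A = (\<Union>a\<in>A. \<Union>b\<in>A - {a}. S a b)"

locale K4_drawing =
  fixes pos :: "'v \<Rightarrow> complex" and S :: "'v \<Rightarrow> 'v \<Rightarrow> complex set" and Q :: "'v set"
  assumes card_Q: "card Q = 4"
    and arc_joining_edge: "\<And>a b. a \<in> Q \<Longrightarrow> b \<in> Q \<Longrightarrow> a \<noteq> b \<Longrightarrow> arc_joining (S a b) (pos a) (pos b)"
    and edge_sym: "\<And>a b. a \<in> Q \<Longrightarrow> b \<in> Q \<Longrightarrow> S a b = S b a"
    and edges_meet: "\<And>a b c d. a \<in> Q \<Longrightarrow> b \<in> Q \<Longrightarrow> c \<in> Q \<Longrightarrow> d \<in> Q \<Longrightarrow> a \<noteq> b \<Longrightarrow> c \<noteq> d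
      \<Longrightarrow> {a, b} \<noteq> {c, d} \<Longrightarrow> S a b \<inter> S c d \<subseteq> pos ` ({a, b} \<inter> {c, d})"
begin

abbreviation opposite_cycle :: "'v \<Rightarrow> complex set" where
  "opposite_cycle a \<equiv> complete_image S (Q - {a})"

abbreviation open_edge :: "'v \<Rightarrow> 'v \<Rightarrow> complex set" where
  "open_edge a b \<equiv> S a b - {pos a, pos b}"

text \<open>The cycle \<open>a c b d\<close>, i.e. the drawing without the edges \<open>ab\<close> and \<open>cd\<close>.\<close>
abbreviation four_cycle :: "'v \<Rightarrow> 'v \<Rightarrow> 'v \<Rightarrow> 'v \<Rightarrow> complex set" where
  "four_cycle a b c d \<equiv> (S a c \<union> S c b) \<union> (S a d \<union> S d b)"

lemma edge_Int:
  assumes "a \<in> Q" "b \<in> Q" "c \<in> Q" "d \<in> Q" "a \<noteq> b" "c \<noteq> d" "{a, b} \<noteq> {c, d}"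
  shows "S a b \<inter> S c d = pos ` ({a, b} \<inter> {c, d})"
  using edges_meet[OF assms] arc_joining_ends[OF arc_joining_edge] assms by fastforce

lemma labels_distinct:
  assumes "Q = {a, b, c, d}"
  shows "a \<noteq> b" "a \<noteq> c" "a \<noteq> d" "b \<noteq> c" "b \<noteq> d" "c \<noteq> d"
  using card_Q assms card_distinct[of "[a, b, c, d]"] by auto

lemma obtain_labels:
  assumes "d \<in> Q"
  obtains a b c where "Q = {a, b, c, d}"
proof -
  have "card (Q - {d}) = 3"
    using card_Q assms by (simp add: card_Diff_singleton_if)
  then obtain a b c where "Q - {d} = {a, b, c}"
    by (auto simp: card_3_iff)
  then show thesis
    using that assms by blast
qed

lemma vertex_on_opposite_cycle:
  assumes "a \<in> Q" "d \<in> Q" "a \<noteq> d"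
  shows "pos a \<in> opposite_cycle d"
proof -
  have "card (Q - {a, d}) = 2"
    using card_Q assms by (simp add: card_Diff_subset)
  then obtain b where "b \<in> Q" "b \<noteq> a" "b \<noteq> d"
    by (metis Diff_iff card_2_iff insertCI insert_iff)
  then show ?thesis
    using arc_joining_ends(1)[OF arc_joining_edge[of a b]] assms
    unfolding complete_image_def by blast
qed

lemma opposite_cycle_eq:
  assumes Q: "Q = {a, b, c, d}"
  shows "opposite_cycle d = S a b \<union> (S a c \<union> S c b)"
proof -
  note dist = labels_distinct[OF Q]
  then have "Q - {d} = {a, b, c}"
    using Q by auto
  then show ?thesis
    using dist edge_sym[of b a] edge_sym[of c a] edge_sym[of b c]
    unfolding complete_image_def by (auto simp: Q)
qed

lemma theta_curve_at:
  assumes Q: "Q = {a, b, c, d}"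
  shows "theta_curve (S a b) (S a c \<union> S c b) (S a d \<union> S d b) (pos a) (pos b)"
proof -
  note dist = labels_distinct[OF Q]
  then have "S a c \<inter> S c b = {pos c}" "S a d \<inter> S d b = {pos d}"
    "S a b \<inter> (S a c \<union> S c b) = {pos a, pos b}" "S a b \<inter> (S a d \<union> S d b) = {pos a, pos b}"
    "(S a c \<union> S c b) \<inter> (S a d \<union> S d b) = {pos a, pos b}"
    by (simp_all add: Q edge_Int Int_Un_distrib Int_Un_distrib2 doubleton_eq_iff)
  then show ?thesis
    using dist arc_joining_Un[OF arc_joining_edge arc_joining_edge] arc_joining_edge
    unfolding theta_curve_def by (auto simp: Q)
qed

lemma edge_minus_end_Int_opposite_cycle:
  assumes Q: "Q = {a, b, c, d}"
  shows "(S c d - {pos c}) \<inter> opposite_cycle d = {}"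
proof -
  note dist = labels_distinct[OF Q]
  then have "S c d \<inter> S a b = {}" "S c d \<inter> S a c = {pos c}" "S c d \<inter> S c b = {pos c}"
    by (simp_all add: Q edge_Int doubleton_eq_iff)
  then show ?thesis
    unfolding opposite_cycle_eq[OF Q] by blast
qed

lemma pos_neq:
  assumes "a \<in> Q" "b \<in> Q" "a \<noteq> b"
  shows "pos a \<noteq> pos b"
  using arc_joining_ends(3)[OF arc_joining_edge[OF assms]] .

lemma open_edge_sym: "a \<in> Q \<Longrightarrow> b \<in> Q \<Longrightarrow> open_edge b a = open_edge a b"
  using edge_sym by (simp add: insert_commute)

lemma four_cycle_swap:
  assumes "Q = {a, b, c, d}"
  shows "four_cycle c d a b = four_cycle a b c d"
  using edge_sym[of c a] edge_sym[of b d] assms by auto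

text \<open>The edge \<open>cd\<close> without \<open>c\<close> is connected, contains \<open>d\<close> and misses the cycle opposite \<open>d\<close>.\<close>
lemma vertex_inside_opposite_cycle_iff:
  assumes Q: "Q = {a, b, c, d}"
  shows "pos d \<in> inside (opposite_cycle d) \<longleftrightarrow> open_edge c d \<subseteq> inside (opposite_cycle d)"
    "pos d \<in> inside (opposite_cycle d) \<longleftrightarrow> open_edge c d \<inter> inside (opposite_cycle d) \<noteq> {}"
proof -
  note dist = labels_distinct[OF Q]
  have arc: "arc_joining (S c d) (pos c) (pos d)"
    using arc_joining_edge dist Q by simp
  let ?X = "S c d - {pos c}"
  have "connected ?X" "?X \<inter> opposite_cycle d = {}" "pos d \<in> ?X"
    using connected_arc_joining_minus_start[OF arc] edge_minus_end_Int_opposite_cycle[OF Q]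
      arc_joining_ends[OF arc] by auto
  moreover have "open_edge c d \<noteq> {}" "open_edge c d \<subseteq> ?X"
    using arc_joining_interior_nonempty[OF arc] by auto
  ultimately show "pos d \<in> inside (opposite_cycle d) \<longleftrightarrow> open_edge c d \<subseteq> inside (opposite_cycle d)"
    "pos d \<in> inside (opposite_cycle d) \<longleftrightarrow> open_edge c d \<inter> inside (opposite_cycle d) \<noteq> {}"
    using connected_subset_inside[of ?X "opposite_cycle d"] by blast+
qed

lemma inside_opposite_cycle_split_by_path:
  assumes Q: "Q = {a, b, c, d}" and d_inside: "pos d \<in> inside (opposite_cycle d)"
  shows "inside (opposite_cycle d)
    = inside (opposite_cycle c) \<union> inside (four_cycle a b c d) \<union> ((S a d \<union> S d b) - {pos a, pos b})"
proof -
  have Q': "Q = {a, b, d, c}"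
    using Q by auto
  note dist = labels_distinct[OF Q]
  have "pos d \<in> (S a d \<union> S d b) - {pos a, pos b}"
    using arc_joining_ends(2)[OF arc_joining_edge[of a d]] pos_neq[of d a] pos_neq[of d b] dist Q
    by auto
  with d_inside have "((S a d \<union> S d b) - {pos a, pos b}) \<inter> inside (S a b \<union> (S a c \<union> S c b)) \<noteq> {}"
    unfolding opposite_cycle_eq[OF Q] by blast
  from theta_curve_split_inside[OF theta_curve_at[OF Q] this] show ?thesis
    unfolding opposite_cycle_eq[OF Q] opposite_cycle_eq[OF Q'] by simp
qed

lemma inside_four_cycle_split:
  assumes Q: "Q = {a, b, c, d}" and "open_edge a b \<inter> inside (four_cycle a b c d) \<noteq> {}"
  shows "inside (four_cycle a b c d)
    = inside (opposite_cycle c) \<union> inside (opposite_cycle d) \<union> open_edge a b"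
proof -
  have Q': "Q = {a, b, d, c}"
    using Q by auto
  from theta_curve_split_inside[OF theta_curve_permute(4)[OF theta_curve_at[OF Q]] assms(2)]
  show ?thesis
    unfolding opposite_cycle_eq[OF Q] opposite_cycle_eq[OF Q'] by (simp add: Un_commute Un_assoc)
qed

lemma inside_opposite_cycle_split:
  assumes Q: "Q = {x, y, z, w}" and w_inside: "pos w \<in> inside (opposite_cycle w)"
  shows "inside (opposite_cycle x) \<union> inside (opposite_cycle y) \<union> inside (opposite_cycle z)
      \<subseteq> inside (opposite_cycle w)"
    "inside (opposite_cycle w) \<subseteq> inside (opposite_cycle x) \<union> inside (opposite_cycle y)
      \<union> inside (opposite_cycle z) \<union> S x w \<union> S y w \<union> S z w"
proof -
  have Q': "Q = {x, y, w, z}" "Q = {z, w, x, y}"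
    using Q by auto
  note dist = labels_distinct[OF Q]
  note split_w = inside_opposite_cycle_split_by_path[OF Q w_inside]
  have zw_w: "open_edge z w \<subseteq> inside (opposite_cycle w)"
    using vertex_inside_opposite_cycle_iff(1)[OF Q] w_inside by blast
  have zw_z: "open_edge z w \<inter> inside (opposite_cycle z) = {}"
  proof (rule ccontr)
    assume "open_edge z w \<inter> inside (opposite_cycle z) \<noteq> {}"
    then have "pos z \<in> inside (opposite_cycle z)"
      using vertex_inside_opposite_cycle_iff(2)[OF Q'(1)] open_edge_sym[of z w] Q by simp
    then have "pos z \<in> inside (opposite_cycle w)"
      unfolding split_w by blast
    moreover have "pos z \<in> opposite_cycle w"
      using vertex_on_opposite_cycle[of z w] dist Q by simp
    ultimately show False
      using inside_no_overlap by blast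
  qed
  have "S z w \<inter> S x w = {pos w}" "S z w \<inter> S w y = {pos w}"
    using dist by (simp_all add: Q edge_Int doubleton_eq_iff)
  then have "open_edge z w \<subseteq> inside (four_cycle x y z w)"
    using zw_w[unfolded split_w] zw_z by blast
  moreover have "open_edge z w \<noteq> {}"
    using arc_joining_interior_nonempty[OF arc_joining_edge[of z w]] dist Q by simp
  ultimately have "open_edge z w \<inter> inside (four_cycle z w x y) \<noteq> {}"
    unfolding four_cycle_swap[OF Q'(2)] by blast
  note split_zw = inside_four_cycle_split[OF Q'(2) this, unfolded four_cycle_swap[OF Q'(2), symmetric]]
  have "S w y = S y w"
    using edge_sym Q by simp
  show "inside (opposite_cycle x) \<union> inside (opposite_cycle y) \<union> inside (opposite_cycle z)
      \<subseteq> inside (opposite_cycle w)"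
    "inside (opposite_cycle w) \<subseteq> inside (opposite_cycle x) \<union> inside (opposite_cycle y)
      \<union> inside (opposite_cycle z) \<union> S x w \<union> S y w \<union> S z w"
    unfolding split_w split_zw unfolding \<open>S w y = S y w\<close> by blast+
qed

lemma edge_inside_four_cycle_or_vertex_inside:
  assumes Q: "Q = {a, b, c, d}"
  shows "pos c \<in> inside (opposite_cycle c) \<or> pos d \<in> inside (opposite_cycle d)
    \<or> open_edge a b \<subseteq> inside (four_cycle a b c d)"
proof -
  have Q': "Q = {a, b, d, c}"
    using Q by auto
  note dist = labels_distinct[OF Q]
  have "pos c \<in> (S a c \<union> S c b) - {pos a, pos b}" "pos d \<in> (S a d \<union> S d b) - {pos a, pos b}"
    using arc_joining_ends[OF arc_joining_edge[of a c]] arc_joining_ends[OF arc_joining_edge[of a d]]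
      pos_neq[of c b] pos_neq[of d b] dist Q by auto
  then show ?thesis
    using theta_curve_arc_inside[OF theta_curve_at[OF Q]] opposite_cycle_eq[OF Q] opposite_cycle_eq[OF Q']
    by auto
qed

lemma chords_inside_four_cycle:
  assumes Q: "Q = {x, y, z, w}"
    and xy: "open_edge x y \<subseteq> inside (four_cycle x y z w)"
    and zw: "open_edge z w \<subseteq> inside (four_cycle x y z w)"
  shows "pos w \<in> inside (opposite_cycle w) \<or> pos z \<in> inside (opposite_cycle z)"
proof -
  have Q': "Q = {x, y, w, z}"
    using Q by auto
  note dist = labels_distinct[OF Q]
  have "open_edge x y \<inter> inside (four_cycle x y z w) \<noteq> {}"
    using xy arc_joining_interior_nonempty[OF arc_joining_edge[of x y]] dist Q by auto
  note split = inside_four_cycle_split[OF Q this]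
  have "S z w \<inter> S x y = {}"
    using dist by (simp add: Q edge_Int doubleton_eq_iff)
  then have "open_edge z w \<subseteq> inside (opposite_cycle z) \<union> inside (opposite_cycle w)"
    using zw unfolding split by blast
  moreover have "open_edge z w \<noteq> {}"
    using arc_joining_interior_nonempty[OF arc_joining_edge[of z w]] dist Q by simp
  ultimately show ?thesis
    using vertex_inside_opposite_cycle_iff(2)[OF Q] vertex_inside_opposite_cycle_iff(2)[OF Q']
      open_edge_sym[of z w] Q by auto
qed

lemma exists_vertex_inside_opposite_cycle: "\<exists>a\<in>Q. pos a \<in> inside (opposite_cycle a)"
proof (rule ccontr)
  assume none: "\<not> ?thesis"
  obtain w where "w \<in> Q"
    using card_Q by fastforce
  then obtain x y z where Q: "Q = {x, y, z, w}"
    by (rule obtain_labels)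
  have Q': "Q = {z, w, x, y}"
    using Q by auto
  have "open_edge x y \<subseteq> inside (four_cycle x y z w)" "open_edge z w \<subseteq> inside (four_cycle x y z w)"
    using edge_inside_four_cycle_or_vertex_inside[OF Q] edge_inside_four_cycle_or_vertex_inside[OF Q']
      four_cycle_swap[OF Q'] none Q by auto
  then show False
    using chords_inside_four_cycle[OF Q] none Q by auto
qed

theorem no_point_on_vertex_side_of_every_opposite_cycle:
  assumes off_edges: "\<And>a b. a \<in> Q \<Longrightarrow> b \<in> Q \<Longrightarrow> a \<noteq> b \<Longrightarrow> p \<notin> S a b"
    and sides: "\<And>a. a \<in> Q \<Longrightarrow> p \<in> inside (opposite_cycle a) \<longleftrightarrow> pos a \<in> inside (opposite_cycle a)"
  shows False
proof -
  obtain w where w: "w \<in> Q" "pos w \<in> inside (opposite_cycle w)"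
    using exists_vertex_inside_opposite_cycle by blast
  obtain x y z where Q: "Q = {x, y, z, w}"
    using obtain_labels[OF w(1)] .
  note dist = labels_distinct[OF Q] and split = inside_opposite_cycle_split[OF Q w(2)]
  have "p \<in> inside (opposite_cycle w)"
    using sides w by blast
  moreover have "p \<notin> S x w \<union> S y w \<union> S z w"
    using off_edges dist Q by auto
  ultimately obtain a where a: "a \<in> {x, y, z}" "p \<in> inside (opposite_cycle a)"
    using split(2) by blast
  then have "pos a \<in> inside (opposite_cycle w)"
    using sides[of a] split(1) Q by auto
  moreover have "pos a \<in> opposite_cycle w"
    using vertex_on_opposite_cycle a(1) dist Q by auto
  ultimately show False
    using inside_no_overlap by blast
qed

end

section \<open>Plane drawings of graphs\<close>

lemma neighbour_outside:
  assumes "finite B" "card B < degree V E u"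
  obtains w where "w \<in> V" "E u w" "w \<notin> B"
proof -
  have "\<not> {y \<in> V. E u y} \<subseteq> B"
    using card_mono[OF assms(1), of "{y \<in> V. E u y}"] assms(2) unfolding degree_def by linarith
  then show thesis
    using that by blast
qed

lemma almost_4_connected_neighbours_connected:
  assumes "almost_4_connected V E U" "u \<in> U" "u \<in> A" "A \<subseteq> V" "card A = 3"
    and "E u s" "E u t" "s \<in> V - A" "t \<in> V - A"
  shows "conn_in E (V - A) s t"
proof (rule ccontr)
  assume "\<not> conn_in E (V - A) s t"
  then have "diff_comp V E A s t"
    unfolding diff_comp_def using assms(8,9) by blast
  moreover have "three_cut V E A"
    unfolding three_cut_def using assms(4,5) \<open>diff_comp V E A s t\<close> by blast
  ultimately have "three_cut V E A \<and> ((\<exists>u u'. u \<in> U - A \<and> u' \<in> U - A \<and> diff_comp V E A u u')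
      \<or> (\<exists>u \<in> U \<inter> A. \<exists>w w'. E u w \<and> E u w' \<and> diff_comp V E A w w'))"
    using assms(2,3,6,7) by blast
  then show False
    using assms(1) unfolding almost_4_connected_def by (rule notE[rotated, OF exI])
qed

lemma conn_in_avoiding_rest_of_clique:
  assumes "simple_graph V E" "almost_4_connected V E U" "u \<in> U"
    and clique: "\<And>a b. a \<in> Q \<Longrightarrow> b \<in> Q \<Longrightarrow> a \<noteq> b \<Longrightarrow> E a b"
    and Q: "u \<in> Q" "Q \<subseteq> V" "card Q = 4" and w: "w \<in> V" "E u w" "w \<notin> Q" and a: "a \<in> Q"
  shows "conn_in E (V - (Q - {a})) w a"
proof (cases "a = u")
  case True
  then have "(w, a) \<in> {(x, y). x \<in> V - (Q - {a}) \<and> y \<in> V - (Q - {a}) \<and> E x y}"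
    using assms(1) w a Q unfolding simple_graph_def by auto
  then show ?thesis
    unfolding conn_in_def by (rule r_into_rtrancl)
next
  case False
  show ?thesis
  proof (rule almost_4_connected_neighbours_connected[OF assms(2,3)])
    show "u \<in> Q - {a}" "Q - {a} \<subseteq> V" "E u a"
      using False Q clique[OF Q(1) a] by auto
    show "card (Q - {a}) = 3"
      using Q(3) a by simp
  qed (use w a Q in auto)
qed

locale plane_drawing =
  fixes V :: "'a set" and E :: "'a \<Rightarrow> 'a \<Rightarrow> bool"
    and f :: "'a \<Rightarrow> complex" and \<gamma> :: "'a \<Rightarrow> 'a \<Rightarrow> real \<Rightarrow> complex"
  assumes simple: "simple_graph V E"
    and inj: "inj_on f V"
    and curve_arc: "\<And>x y. E x y \<Longrightarrow> arc (\<gamma> x y) \<and> pathstart (\<gamma> x y) = f x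
      \<and> pathfinish (\<gamma> x y) = f y \<and> path_image (\<gamma> x y) \<inter> f ` V = {f x, f y}"
    and curves_meet: "\<And>x y x' y'. E x y \<Longrightarrow> E x' y' \<Longrightarrow> {x, y} \<noteq> {x', y'}
      \<Longrightarrow> path_image (\<gamma> x y) \<inter> path_image (\<gamma> x' y') \<subseteq> f ` ({x, y} \<inter> {x', y'})"

lemma planar_obtain_drawing:
  assumes "simple_graph V E" "planar V E"
  obtains f \<gamma> where "plane_drawing V E f \<gamma>"
proof -
  obtain f :: "'a \<Rightarrow> complex" and \<gamma> where inj: "inj_on f V"
    and arcs: "\<forall>x y. E x y \<longrightarrow> arc (\<gamma> x y) \<and> pathstart (\<gamma> x y) = f x \<and> pathfinish (\<gamma> x y) = f y
      \<and> path_image (\<gamma> x y) \<inter> f ` V = {f x, f y}"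
    and meet: "\<forall>x y x' y'. E x y \<longrightarrow> E x' y' \<longrightarrow> {x, y} \<noteq> {x', y'} \<longrightarrow>
      path_image (\<gamma> x y) \<inter> path_image (\<gamma> x' y') \<subseteq> f ` ({x, y} \<inter> {x', y'})"
    using assms(2) unfolding planar_def by (elim exE conjE) (rule that)
  have "plane_drawing V E f \<gamma>"
    by unfold_locales (fact assms(1) inj arcs[rule_format] meet[rule_format])+
  then show thesis
    by (rule that)
qed

context plane_drawing
begin

lemma adjacent_sym: "E x y \<Longrightarrow> E y x"
  and adjacent_vertices: "E x y \<Longrightarrow> x \<in> V \<and> y \<in> V \<and> x \<noteq> y"
  using simple unfolding simple_graph_def by blast+

text \<open>\<open>\<gamma> x y\<close> and \<open>\<gamma> y x\<close> may be different curves; choosing one orientation per unordered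
  pair makes the image of an edge symmetric in its ends.\<close>
definition edge_image :: "'a \<Rightarrow> 'a \<Rightarrow> complex set" where
  "edge_image x y = path_image (case SOME e. e \<in> {(x, y), (y, x)} of (a, b) \<Rightarrow> \<gamma> a b)"

lemma edge_image_sym: "edge_image x y = edge_image y x"
  unfolding edge_image_def by (simp add: insert_commute)

lemma edge_image_obtain:
  obtains a' b' where "{a', b'} = {a, b}" "edge_image a b = path_image (\<gamma> a' b')"
proof -
  have "(SOME e. e \<in> {(a, b), (b, a)}) \<in> {(a, b), (b, a)}"
    by (rule someI[of _ "(a, b)"]) simp
  then show thesis
    using that[of a b] that[of b a] unfolding edge_image_def by (auto simp: insert_commute)
qed

lemma adjacent_if_doubleton_eq: "E a b \<Longrightarrow> {a', b'} = {a, b} \<Longrightarrow> E a' b'"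
  using adjacent_sym by (auto simp: doubleton_eq_iff)

lemma arc_joining_edge_image:
  assumes "E a b"
  shows "arc_joining (edge_image a b) (f a) (f b)"
proof -
  obtain a' b' where ab: "{a', b'} = {a, b}" "edge_image a b = path_image (\<gamma> a' b')"
    by (rule edge_image_obtain)
  then have "arc_joining (edge_image a b) (f a') (f b')"
    using curve_arc[OF adjacent_if_doubleton_eq[OF assms ab(1)]] unfolding arc_joining_def by blast
  then show ?thesis
    using ab(1) arc_joining_sym by (auto simp: doubleton_eq_iff)
qed

lemma edge_image_Int_vertices:
  assumes "E a b"
  shows "edge_image a b \<inter> f ` V = {f a, f b}"
proof -
  obtain a' b' where ab: "{a', b'} = {a, b}" "edge_image a b = path_image (\<gamma> a' b')"
    by (rule edge_image_obtain)
  then show ?thesis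
    using curve_arc[OF adjacent_if_doubleton_eq[OF assms ab(1)]] by (auto simp: doubleton_eq_iff)
qed

lemma vertex_notin_edge_image:
  assumes "v \<in> V" "E a b" "v \<noteq> a" "v \<noteq> b"
  shows "f v \<notin> edge_image a b"
proof
  assume "f v \<in> edge_image a b"
  then have "f v \<in> {f a, f b}"
    using edge_image_Int_vertices[OF assms(2)] assms(1) by blast
  then show False
    using adjacent_vertices[OF assms(2)] inj assms by (auto simp: inj_on_eq_iff)
qed

lemma path_image_Int_edge_image:
  assumes "E c d" "E a b" "{c, d} \<noteq> {a, b}"
  shows "path_image (\<gamma> c d) \<inter> edge_image a b \<subseteq> f ` ({c, d} \<inter> {a, b})"
proof -
  obtain a' b' where ab: "{a', b'} = {a, b}" "edge_image a b = path_image (\<gamma> a' b')"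
    by (rule edge_image_obtain)
  then show ?thesis
    using curves_meet[OF assms(1) adjacent_if_doubleton_eq[OF assms(2) ab(1)]] assms(3) by simp
qed

lemma edge_images_meet:
  assumes "E a b" "E c d" "{a, b} \<noteq> {c, d}"
  shows "edge_image a b \<inter> edge_image c d \<subseteq> f ` ({a, b} \<inter> {c, d})"
proof -
  obtain a' b' where ab: "{a', b'} = {a, b}" "edge_image a b = path_image (\<gamma> a' b')"
    by (rule edge_image_obtain)
  then show ?thesis
    using path_image_Int_edge_image[OF adjacent_if_doubleton_eq[OF assms(1) ab(1)] assms(2)] assms(3)
    by simp
qed

lemma K4_drawing_clique:
  assumes "card Q = 4" and clique: "\<And>a b. a \<in> Q \<Longrightarrow> b \<in> Q \<Longrightarrow> a \<noteq> b \<Longrightarrow> E a b"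
  shows "K4_drawing f edge_image Q"
proof
  show "card Q = 4"
    by (fact assms(1))
  show "arc_joining (edge_image a b) (f a) (f b)" if "a \<in> Q" "b \<in> Q" "a \<noteq> b" for a b
    using arc_joining_edge_image clique that by blast
  show "edge_image a b = edge_image b a" for a b
    by (rule edge_image_sym)
  show "edge_image a b \<inter> edge_image c d \<subseteq> f ` ({a, b} \<inter> {c, d})"
    if "a \<in> Q" "b \<in> Q" "c \<in> Q" "d \<in> Q" "a \<noteq> b" "c \<noteq> d" "{a, b} \<noteq> {c, d}" for a b c d
    using edge_images_meet clique that by blast
qed

lemma conn_in_connected_component:
  assumes "conn_in E W s t" "s \<in> W" "\<And>v. v \<in> W \<Longrightarrow> f v \<notin> K"
    and "\<And>a b. a \<in> W \<Longrightarrow> b \<in> W \<Longrightarrow> E a b \<Longrightarrow> path_image (\<gamma> a b) \<inter> K = {}"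
  shows "connected_component (- K) (f s) (f t)"
proof -
  have "(s, t) \<in> {(a, b). a \<in> W \<and> b \<in> W \<and> E a b}\<^sup>*"
    using assms(1) unfolding conn_in_def by simp
  then show ?thesis
  proof (induction rule: rtrancl_induct)
    case base
    then show ?case
      using assms(2,3) by (simp add: connected_component_refl)
  next
    case (step a b)
    then have "a \<in> W" "b \<in> W" "E a b"
      by auto
    then have "connected_component (- K) (f a) (f b)"
      using curve_arc[of a b] assms(4)
      by (intro connected_componentI[of "path_image (\<gamma> a b)"])
        (auto intro: connected_path_image arc_imp_path pathstart_in_path_image pathfinish_in_path_image)
    then show ?case
      using step.IH connected_component_trans by metis
  qed
qed

lemma conn_in_same_side_of_clique:
  assumes clique: "\<And>a b. a \<in> A \<Longrightarrow> b \<in> A \<Longrightarrow> a \<noteq> b \<Longrightarrow> E a b"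
    and conn: "conn_in E (V - A) s t" and s: "s \<in> V - A"
  shows "f s \<in> inside (complete_image edge_image A) \<longleftrightarrow> f t \<in> inside (complete_image edge_image A)"
proof -
  let ?K = "complete_image edge_image A"
  have "f v \<notin> ?K" if "v \<in> V - A" for v
    using vertex_notin_edge_image clique that unfolding complete_image_def by blast
  moreover have "path_image (\<gamma> c d) \<inter> ?K = {}" if "c \<in> V - A" "d \<in> V - A" "E c d" for c d
  proof -
    have "path_image (\<gamma> c d) \<inter> edge_image a b = {}" if "a \<in> A" "b \<in> A" "a \<noteq> b" for a b
    proof -
      have "{c, d} \<inter> {a, b} = {}"
        using that \<open>c \<in> V - A\<close> \<open>d \<in> V - A\<close> by auto
      then show ?thesis
        using path_image_Int_edge_image[OF \<open>E c d\<close> clique[OF that]] by auto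
    qed
    then show ?thesis
      unfolding complete_image_def by blast
  qed
  ultimately have "connected_component (- ?K) (f s) (f t)"
    by (rule conn_in_connected_component[OF conn s])
  then show ?thesis
    using inside_same_component connected_component_sym by metis
qed

end

theorem claim1:
  fixes V U :: "'a set" and E :: "'a \<Rightarrow> 'a \<Rightarrow> bool"
  assumes "simple_graph V E"
    and "planar V E"
    and "U \<subseteq> V" and "card U = 4"
    and "\<forall>u \<in> U. degree V E u = 5"
    and "almost_4_connected V E U"
  shows "\<not> (\<exists>u \<in> U. \<exists>v1 v2 v3. E u v1 \<and> E u v2 \<and> E u v3 \<and> distinct [v1, v2, v3]
              \<and> E v1 v2 \<and> E v1 v3 \<and> E v2 v3)"
proof
  assume "\<exists>u \<in> U. \<exists>v1 v2 v3. E u v1 \<and> E u v2 \<and> E u v3 \<and> distinct [v1, v2, v3]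
              \<and> E v1 v2 \<and> E v1 v3 \<and> E v2 v3"
  then obtain u v1 v2 v3 where u: "u \<in> U" and K4: "E u v1" "E u v2" "E u v3"
    "distinct [v1, v2, v3]" "E v1 v2" "E v1 v3" "E v2 v3"
    by blast
  obtain f \<gamma> where "plane_drawing V E f \<gamma>"
    using planar_obtain_drawing assms(1,2) .
  then interpret plane_drawing V E f \<gamma> .
  define Q where "Q = {u, v1, v2, v3}"
  have clique: "\<And>a b. a \<in> Q \<Longrightarrow> b \<in> Q \<Longrightarrow> a \<noteq> b \<Longrightarrow> E a b"
    using K4 adjacent_sym unfolding Q_def by blast
  have card_Q: "card Q = 4"
    using K4 adjacent_vertices unfolding Q_def by auto
  interpret K4_drawing f edge_image Q
    by (rule K4_drawing_clique[OF card_Q clique])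
  have Q_V: "Q \<subseteq> V"
    using K4 adjacent_vertices unfolding Q_def by auto
  obtain w where w: "w \<in> V" "E u w" "w \<notin> Q"
    using neighbour_outside[of Q V E u] card_Q assms(5) u unfolding Q_def by auto
  have "f w \<notin> edge_image a b" if "a \<in> Q" "b \<in> Q" "a \<noteq> b" for a b
    using vertex_notin_edge_image[OF w(1) clique[OF that]] w(3) that by blast
  moreover have "f w \<in> inside (opposite_cycle a) \<longleftrightarrow> f a \<in> inside (opposite_cycle a)" if a: "a \<in> Q" for a
  proof -
    have "u \<in> Q"
      unfolding Q_def by simp
    from conn_in_avoiding_rest_of_clique[OF assms(1,6) u clique this Q_V card_Q w a]
    show ?thesis
      using conn_in_same_side_of_clique[of "Q - {a}" w a] clique w(1,3) by blast
  qed
  ultimately show False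
    by (rule no_point_on_vertex_side_of_every_opposite_cycle)
qed

end
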